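(* Let $a>0$. Hurwitz's zeta function satisfies: (a) $\zeta(0,a)=\frac12-a$. (b) $\zeta(-1,a)=\frac{a-a^2}{2}-\frac1{12}$. (c) For every integer $k\ge0$ and every complex $s\ne1$ with $\mathrm{Re}\,s>-(k+2)$, $$\zeta(s,a)=\frac{a^{1-s}}{s-1}+\frac12a^{-s}+\sum_{j=1}^{k+1}s(s+1)\cdots(s+j-1)\,q_j(1)\,a^{-s-j}+s(s+1)\cdots(s+k+2)\int_0^1p_{k+2}(x)\,\zeta(s+k+3,x+a)\,dx.$$ (d) For every integer $k\ge2$, $\zeta(-k,a)=-\frac{a^{k+1}}{k+1}+\frac12a^k+\sum_{j=1}^{k}(-1)^jq_j(1)\frac{k!}{(k-j)!}a^{k-j}$. (e) For every integer $k\ge0$ and every complex $s\ne1$ with $\mathrm{Re}\,s>-(k+2)$, $$\zeta(s)=\frac1{s-1}+\frac12+\sum_{j=1}^{k+1}s(s+1)\cdots(s+j-1)\,q_j(1)+s(s+1)\cdots(s+k+2)\int_0^1p_{k+2}(x)\,\zeta(s+k+3,x+1)\,dx.$$ (f) For every integer $k\ge0$, $$\zeta'(-k)=-\frac1{(k+1)^2}+\sum_{j=1}^{k}(-1)^{j+1}\frac{k!}{(k-j)!}q_j(1)\big[H_k-H_{k-j}\big]+(-1)^kk!\int_0^1p_{k+1}(x)\,\zeta(2,x+1)\,dx.$$ (g) $\zeta'(0)=-1+\int_0^1p_1(x)\,\zeta(2,x+1)\,dx$.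
   Context: $\zeta(s,a)=\sum_{m=0}^\infty(m+a)^{-s}$ for $\mathrm{Re}\,s>1$, $a>0$, extended by analytic continuation in $s$ to $\mathbb C\setminus\{1\}$; $\zeta(s)=\zeta(s,1)$ is the Riemann zeta function and $\zeta'$ its derivative. The polynomials $p_j,q_j$ ($j\ge1$) are defined recursively by $p_1(x)=\frac{x-x^2}{2}$, $q_j(x)=\int_0^xp_j(t)\,dt$, and $p_{j+1}(x)=q_j(x)-x\,q_j(1)$. $H_n=\sum_{i=1}^n\frac1i$ is the $n$-th harmonic number, with $H_0=0$. *)

theory Defs
  imports "HOL-Complex_Analysis.Complex_Analysis"
begin

definition hurwitz_zeta :: "complex \<Rightarrow> real \<Rightarrow> complex" where
  "hurwitz_zeta s a =
     (SOME f. f holomorphic_on (- {1}) \<and>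
        (\<forall>z. Re z > 1 \<longrightarrow> f z = (\<Sum>m. 1 / (complex_of_real (real m + a)) powr z))) s"

definition riemann_zeta :: "complex \<Rightarrow> complex" where
  "riemann_zeta s = hurwitz_zeta s 1"

definition sint :: "(real \<Rightarrow> real) \<Rightarrow> real \<Rightarrow> real" where
  "sint f x = (if 0 \<le> x then integral {0..x} f else - integral {x..0} f)"

text \<open>p j for j >= 1 (p 0 is an unused dummy).\<close>
fun p :: "nat \<Rightarrow> real \<Rightarrow> real" where
  "p 0 x = 0"
| "p (Suc 0) x = (x - x^2) / 2"
| "p (Suc (Suc j)) x = sint (\<lambda>t. p (Suc j) t) x - x * sint (\<lambda>t. p (Suc j) t) 1"

definition q :: "nat \<Rightarrow> real \<Rightarrow> real" where
  "q j x = sint (p j) x"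

end

theory Submission
  imports Defs
begin

text \<open>For \<open>Re s > 1\<close> split \<open>\<zeta>(s, a) = \<Sum>\<^sub>m (m + a)^(-s)\<close> into integrals over the cells
  \<open>[m + a, m + a + 1]\<close> and integrate by parts on each cell. The trapezoidal rule gives
  \<open>\<integral>\<^sub>0\<^sup>1 (x + c)^(-s) dx\<close> up to a remainder against \<open>p\<^sub>1\<close>; since \<open>p\<^sub>j\<^sub>+\<^sub>1' = p\<^sub>j - q\<^sub>j(1)\<close>
  and every \<open>p\<^sub>j\<close> vanishes at \<open>0\<close> and \<open>1\<close>, a remainder against \<open>p\<^sub>j\<close> splits off a multiple of
  \<open>q\<^sub>j(1)\<close> and leaves one against \<open>p\<^sub>j\<^sub>+\<^sub>1\<close> with the exponent raised by one. Summing over the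
  cells yields the expansion (c) of every order \<open>k\<close>. Its right-hand side is holomorphic for
  \<open>Re s > -(k + 2)\<close>, \<open>s \<noteq> 1\<close>, and expansions of different orders agree, so together they
  are the analytic continuation of \<open>\<zeta>(\<cdot>, a)\<close>. At \<open>s = 0, -1, -k\<close> the Pochhammer factor in
  front of the remainder vanishes, which gives (a), (b), (d); differentiating the expansion at
  \<open>s = -k\<close> gives (f) and (g).\<close>

section \<open>The polynomials \<open>p\<^sub>j\<close>\<close>

lemma sint_has_real_derivative:
  assumes "continuous_on {0..b} f" "x \<in> {0..b}"
  shows "(sint f has_real_derivative f x) (at x within {0..b})"
  using assms
  by (auto intro!: has_field_derivative_transform_within[OF integral_has_real_derivative, where d=1]
           simp: sint_def)

lemma continuous_on_sint: "continuous_on {0..b} f \<Longrightarrow> continuous_on {0..b} (sint f)"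
  using sint_has_real_derivative DERIV_continuous by (metis continuous_on_eq_continuous_within)

lemma p_Suc: "j \<ge> 1 \<Longrightarrow> p (Suc j) x = q j x - x * q j 1"
  by (cases j) (auto simp: q_def)

lemma continuous_on_p: "continuous_on {0..1} (p j)"
proof (induction j)
  case (Suc j)
  show ?case
  proof (cases "j = 0")
    case False
    then have "p (Suc j) = (\<lambda>x. sint (p j) x - x * sint (p j) 1)"
      by (auto simp: p_Suc q_def)
    then show ?thesis
      using continuous_on_sint[OF Suc.IH] by (auto intro!: continuous_intros)
  qed (auto intro!: continuous_intros)
qed simp

lemma p_Suc_has_real_derivative:
  assumes "j \<ge> 1" "x \<in> {0..1}"
  shows "(p (Suc j) has_real_derivative p j x - q j 1) (at x within {0..1})"
proof -
  have "p (Suc j) = (\<lambda>x. sint (p j) x - x * q j 1)"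
    using assms(1) by (auto simp: p_Suc q_def)
  then show ?thesis
    using sint_has_real_derivative[OF continuous_on_p assms(2)]
    by (auto intro!: derivative_eq_intros)
qed

lemma p_at_0: "p j 0 = 0"
  by (cases j; cases "j - 1") (auto simp: sint_def)

lemma p_at_1: "p j 1 = 0"
  by (cases j; cases "j - 1") (auto simp: sint_def)

lemma p_1_eq: "p 1 = (\<lambda>x. (x - x^2) / 2)"
  by (rule ext) simp

lemma q_1_at_1: "q 1 1 = 1/12"
proof -
  have "((\<lambda>x::real. (x - x^2) / 2) has_integral
          ((\<lambda>x. x^2/4 - x^3/6) 1 - (\<lambda>x. x^2/4 - x^3/6) 0)) {0..1}"
    by (intro fundamental_theorem_of_calculus)
       (auto intro!: derivative_eq_intros
             simp: has_real_derivative_iff_has_vector_derivative[symmetric] field_simps power2_eq_square)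
  then have "((\<lambda>x::real. (x - x^2) / 2) has_integral 1/12) {0..1}"
    by simp
  then have "integral {0..1} (p 1) = 1/12"
    unfolding p_1_eq by (rule integral_unique)
  then show ?thesis
    by (simp add: q_def sint_def)
qed

section \<open>Real powers with complex exponent\<close>

text \<open>\<open>r^(-w)\<close> through the real logarithm, so that derivatives in \<open>r\<close> need no complex \<open>Ln\<close>.\<close>
definition neg_powr :: "real \<Rightarrow> complex \<Rightarrow> complex" where
  "neg_powr r w = exp (- w * of_real (ln r))"

lemma neg_powr_eq_powr: "r > 0 \<Longrightarrow> neg_powr r w = of_real r powr (- w)"
  by (simp add: neg_powr_def powr_def Ln_of_real)

lemma neg_powr_eq_inverse_powr: "r > 0 \<Longrightarrow> neg_powr r w = 1 / of_real r powr w"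
  by (simp add: neg_powr_def powr_def Ln_of_real exp_minus field_simps)

lemma norm_neg_powr: "r > 0 \<Longrightarrow> norm (neg_powr r w) = r powr (- Re w)"
  by (simp add: neg_powr_def powr_def)

lemma neg_powr_add: "neg_powr r (w + v) = neg_powr r w * neg_powr r v"
  by (simp add: neg_powr_def exp_add[symmetric] algebra_simps)

lemma neg_powr_0 [simp]: "neg_powr r 0 = 1"
  by (simp add: neg_powr_def)

lemma neg_powr_1_left [simp]: "neg_powr 1 w = 1"
  by (simp add: neg_powr_def)

lemma neg_powr_minus_of_nat: "r > 0 \<Longrightarrow> neg_powr r (- of_nat n) = of_real (r ^ n)"
  by (simp add: neg_powr_eq_powr)

lemma norm_neg_powr_le:
  assumes "0 < r0" "r0 \<le> r" "0 \<le> Re w"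
  shows "norm (neg_powr r w) \<le> r0 powr (- Re w)"
  using assms by (simp add: norm_neg_powr powr_mono2')

lemma neg_powr_shift_has_vector_derivative:
  assumes "x + c > 0"
  shows "((\<lambda>x. neg_powr (x + c) w) has_vector_derivative - w * neg_powr (x + c) (w + 1))
           (at x within S)"
proof -
  have "((\<lambda>x. of_real (ln (x + c))) has_vector_derivative of_real (inverse (x + c))) (at x within S)"
    using assms by (auto intro!: has_vector_derivative_of_real derivative_eq_intros
                         simp: inverse_eq_divide)
  then have "((\<lambda>x. neg_powr (x + c) w) has_vector_derivative
               of_real (inverse (x + c)) * (neg_powr (x + c) w * - w)) (at x within S)"
    unfolding neg_powr_def
    by (rule field_vector_diff_chain_within[unfolded o_def]) (auto intro!: derivative_eq_intros)
  moreover have "neg_powr (x + c) (w + 1) = neg_powr (x + c) w * of_real (inverse (x + c))"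
    unfolding neg_powr_add using assms by (simp add: neg_powr_def exp_minus flip: of_real_exp)
  ultimately show ?thesis
    by (simp add: mult_ac)
qed

lemma neg_powr_has_field_derivative:
  "((\<lambda>w. neg_powr r w) has_field_derivative - of_real (ln r) * neg_powr r w) (at w within U)"
  unfolding neg_powr_def by (auto intro!: derivative_eq_intros)

lemma continuous_on_neg_powr_shift: "c > 0 \<Longrightarrow> continuous_on {0..1} (\<lambda>x. neg_powr (x + c) w)"
  unfolding neg_powr_def by (auto intro!: continuous_intros)

lemma holomorphic_on_neg_powr: "f holomorphic_on S \<Longrightarrow> (\<lambda>s. neg_powr r (f s)) holomorphic_on S"
  unfolding neg_powr_def by (intro holomorphic_intros)

lemma neg_powr_tendsto_0:
  assumes "a > 0" "Re w > 0"
  shows "(\<lambda>m. neg_powr (real m + a) w) \<longlonglongrightarrow> 0"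
proof (rule tendsto_norm_zero_cancel)
  have "filterlim (\<lambda>m. a + real m) at_top sequentially"
    by (rule filterlim_tendsto_add_at_top[OF tendsto_const filterlim_real_sequentially])
  then have "(\<lambda>m. (real m + a) powr (- Re w)) \<longlonglongrightarrow> 0"
    using assms by (intro tendsto_neg_powr) (auto simp: add.commute)
  then show "(\<lambda>m. norm (neg_powr (real m + a) w)) \<longlonglongrightarrow> 0"
    using assms by (simp add: norm_neg_powr add_pos_nonneg)
qed

section \<open>Integrals against the Hurwitz series\<close>

definition cell_integral :: "(real \<Rightarrow> real) \<Rightarrow> complex \<Rightarrow> real \<Rightarrow> complex" where
  "cell_integral P w c = integral {0..1} (\<lambda>x. of_real (P x) * neg_powr (x + c) w)"

definition hz_series :: "complex \<Rightarrow> real \<Rightarrow> complex" where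
  "hz_series w b = (\<Sum>m. neg_powr (real m + b) w)"

text \<open>The paper's \<open>\<integral>\<^sub>0\<^sup>1 P(x) \<zeta>(w, x + a) dx\<close>, summed cell by cell over
  \<open>[m + a, m + a + 1]\<close>.\<close>
definition zeta_integral :: "(real \<Rightarrow> real) \<Rightarrow> real \<Rightarrow> complex \<Rightarrow> complex" where
  "zeta_integral P a w = (\<Sum>m. cell_integral P w (real m + a))"

lemma continuous_on_cell_integrand:
  assumes "continuous_on {0..1} P" "c > 0"
  shows "continuous_on {0..1} (\<lambda>x. of_real (P x) * neg_powr (x + c) w)"
  using assms continuous_on_neg_powr_shift[of c w] by (auto intro!: continuous_intros)

lemma cell_integral_has_integral:
  assumes "continuous_on {0..1} P" "c > 0"
  shows "((\<lambda>x. of_real (P x) * neg_powr (x + c) w) has_integral cell_integral P w c) {0..1}"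
  unfolding cell_integral_def
  using integrable_continuous_interval[OF continuous_on_cell_integrand[OF assms]]
  by (simp add: integrable_integral)

lemma norm_cell_integral_le:
  assumes "continuous_on {0..1} P" "c > 0" "Re w \<ge> 0"
    and "\<And>x. x \<in> {0..1} \<Longrightarrow> \<bar>P x\<bar> \<le> B"
  shows "norm (cell_integral P w c) \<le> B * c powr (- Re w)"
proof -
  have "0 \<le> B"
    using assms(4)[of 0] by fastforce
  have "norm (of_real (P x) * neg_powr (x + c) w) \<le> B * c powr (- Re w)"
    if "x \<in> cbox 0 1" for x :: real
    using assms that \<open>0 \<le> B\<close> by (auto simp: norm_mult intro!: mult_mono norm_neg_powr_le)
  then show ?thesis
    using has_integral_bound[OF _ cell_integral_has_integral[OF assms(1,2), unfolded box_real(2)[symmetric]]]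
      \<open>0 \<le> B\<close> by simp
qed

lemma holomorphic_cell_integral:
  assumes "continuous_on {0..1} P" "c > 0"
  shows "(\<lambda>w. cell_integral P w c) holomorphic_on UNIV"
proof -
  define f' where "f' w t = of_real (P t) * (- of_real (ln (t + c)) * neg_powr (t + c) w)" for w t
  have "(\<lambda>w. integral (cbox 0 1) (\<lambda>t. of_real (P t) * neg_powr (t + c) w)) holomorphic_on UNIV"
  proof (rule leibniz_rule_holomorphic[where fx = f'])
    show "((\<lambda>w. of_real (P t) * neg_powr (t + c) w) has_field_derivative f' w t) (at w within UNIV)"
      for w t unfolding f'_def by (rule DERIV_cmult[OF neg_powr_has_field_derivative])
    show "(\<lambda>t. of_real (P t) * neg_powr (t + c) w) integrable_on cbox 0 1" for w
      using continuous_on_cell_integrand[OF assms] integrable_continuous_interval by auto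
    have ln: "continuous_on (UNIV \<times> {0..1}) (\<lambda>z :: complex \<times> real. ln (snd z + c))"
      using assms(2) by (intro continuous_on_ln continuous_intros) auto
    have "continuous_on (UNIV \<times> {0..1}) (\<lambda>z :: complex \<times> real. P (snd z))"
      by (rule continuous_on_compose2[OF assms(1)]) (auto intro!: continuous_intros)
    moreover have "continuous_on (UNIV \<times> {0..1})
        (\<lambda>z :: complex \<times> real. exp (- (fst z * of_real (ln (snd z + c)))))"
      by (intro continuous_on_exp continuous_on_minus continuous_on_mult continuous_on_of_real ln
            continuous_on_fst[OF continuous_on_id])
    ultimately have "continuous_on (UNIV \<times> {0..1}) (\<lambda>z :: complex \<times> real.
        of_real (P (snd z)) * (- of_real (ln (snd z + c)) * exp (- fst z * of_real (ln (snd z + c)))))"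
      using ln assms(2) by (auto intro!: continuous_intros)
    then show "continuous_on (UNIV \<times> cbox 0 1) (\<lambda>(w, t). f' w t)"
      by (simp add: f'_def neg_powr_def case_prod_unfold)
  qed auto
  then show ?thesis
    by (simp add: cell_integral_def)
qed

lemma summable_shifted_powr:
  assumes "b > 0" "\<sigma> > 1"
  shows "summable (\<lambda>m. (real m + b) powr (- \<sigma>))"
proof (rule summable_comparison_test')
  show "summable (\<lambda>n. real n powr (- \<sigma>))"
    using assms by (simp add: summable_real_powr_iff)
  show "norm ((real n + b) powr (- \<sigma>)) \<le> real n powr (- \<sigma>)" if "n \<ge> 1" for n
    using assms that by (auto intro!: powr_mono2')
qed

lemma hz_series_sums:
  assumes "b > 0" "Re w > 1"
  shows "(\<lambda>m. neg_powr (real m + b) w) sums hz_series w b"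
proof -
  have "norm (neg_powr (real m + b) w) = (real m + b) powr (- Re w)" for m
    using assms by (intro norm_neg_powr) simp
  then have "summable (\<lambda>m. norm (neg_powr (real m + b) w))"
    using summable_shifted_powr[OF assms] by simp
  then show ?thesis
    unfolding hz_series_def by (rule summable_sums[OF summable_norm_cancel])
qed

lemma zeta_integral_sums:
  assumes "continuous_on {0..1} P" "a > 0" "Re w > 1"
  shows "(\<lambda>m. cell_integral P w (real m + a)) sums zeta_integral P a w"
proof -
  obtain B where B: "\<And>x. x \<in> {0..1} \<Longrightarrow> \<bar>P x\<bar> \<le> B"
    using continuous_on_compact_bound[OF compact_Icc assms(1)] by auto
  have "summable (\<lambda>m. cell_integral P w (real m + a))"
  proof (rule summable_comparison_test)
    show "\<exists>N. \<forall>m\<ge>N. norm (cell_integral P w (real m + a)) \<le> B * (real m + a) powr (- Re w)"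
      using assms B by (intro exI[of _ 0] allI impI norm_cell_integral_le) auto
    show "summable (\<lambda>m. B * (real m + a) powr (- Re w))"
      using assms by (intro summable_mult summable_shifted_powr) auto
  qed
  then show ?thesis
    unfolding zeta_integral_def by (rule summable_sums)
qed

lemma zeta_integral_uniform_limit:
  assumes "continuous_on {0..1} P" "a > 0" "\<sigma> > 1"
  shows "uniform_limit {w. Re w \<ge> \<sigma>} (\<lambda>n w. \<Sum>m<n. cell_integral P w (real m + a))
           (zeta_integral P a) sequentially"
proof -
  obtain B where B: "\<And>x. x \<in> {0..1} \<Longrightarrow> \<bar>P x\<bar> \<le> B"
    using continuous_on_compact_bound[OF compact_Icc assms(1)] by auto
  have "norm (cell_integral P w (real n + a)) \<le> B * (real n + a) powr (- \<sigma>)"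
    if "n \<ge> 1" "Re w \<ge> \<sigma>" for n w
  proof -
    have "norm (cell_integral P w (real n + a)) \<le> B * (real n + a) powr (- Re w)"
      using assms B that by (intro norm_cell_integral_le) auto
    also have "\<dots> \<le> B * (real n + a) powr (- \<sigma>)"
      using assms B[of 0] that by (intro mult_left_mono powr_mono) auto
    finally show ?thesis .
  qed
  then have "\<forall>\<^sub>F n in sequentially. \<forall>w\<in>{w. Re w \<ge> \<sigma>}.
      norm (cell_integral P w (real n + a)) \<le> B * (real n + a) powr (- \<sigma>)"
    unfolding eventually_sequentially by auto
  moreover have "summable (\<lambda>n. B * (real n + a) powr (- \<sigma>))"
    using assms by (intro summable_mult summable_shifted_powr)
  ultimately show ?thesis
    unfolding zeta_integral_def by (rule Weierstrass_m_test_ev)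
qed

lemma holomorphic_zeta_integral:
  assumes "continuous_on {0..1} P" "a > 0"
  shows "zeta_integral P a holomorphic_on {w. Re w > 1}"
proof (rule holomorphic_uniform_sequence[where f = "\<lambda>n w. \<Sum>m<n. cell_integral P w (real m + a)"])
  show "(\<lambda>w. \<Sum>m<n. cell_integral P w (real m + a)) holomorphic_on {w. 1 < Re w}" for n
    using holomorphic_on_subset[OF holomorphic_cell_integral[OF assms(1)]] assms(2)
    by (intro holomorphic_on_sum) auto
  fix w0 :: complex assume "w0 \<in> {w. 1 < Re w}"
  then obtain d where d: "d > 0" "Re w0 = 1 + 2 * d"
    by (intro that[of "(Re w0 - 1) / 2"]) (auto simp: field_simps)
  have "Re w \<ge> 1 + d" if "w \<in> cball w0 d" for w
    using that abs_Re_le_cmod[of "w0 - w"] d by (simp add: dist_norm)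
  then have sub: "cball w0 d \<subseteq> {w. Re w \<ge> 1 + d}"
    by blast
  have "uniform_limit (cball w0 d) (\<lambda>n w. \<Sum>m<n. cell_integral P w (real m + a))
      (zeta_integral P a) sequentially"
    using zeta_integral_uniform_limit[OF assms, of "1 + d"] d(1) sub by (auto intro: uniform_limit_on_subset)
  moreover have "cball w0 d \<subseteq> {w. 1 < Re w}"
    using sub d(1) by auto
  ultimately show "\<exists>d>0. cball w0 d \<subseteq> {w. 1 < Re w} \<and>
      uniform_limit (cball w0 d) (\<lambda>n w. \<Sum>m<n. cell_integral P w (real m + a))
        (zeta_integral P a) sequentially"
    using d(1) by blast
qed (simp add: open_halfspace_Re_gt)

section \<open>Integration by parts on a cell\<close>

lemma has_integral_derivative_eq_diff:
  fixes f :: "real \<Rightarrow> 'a::banach"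
  assumes "a \<le> b" "\<And>x. x \<in> {a..b} \<Longrightarrow> (f has_vector_derivative f' x) (at x within {a..b})"
    and "(f' has_integral I) {a..b}"
  shows "I = f b - f a"
  using has_integral_unique[OF assms(3) fundamental_theorem_of_calculus[OF assms(1,2)]] .

lemma cell_integral_by_parts:
  assumes "continuous_on {0..1} P" "c > 0"
    and U: "\<And>x. x \<in> {0..1} \<Longrightarrow> (U has_real_derivative P x) (at x within {0..1})"
  shows "cell_integral P w c = of_real (U 1) * neg_powr (1 + c) w - of_real (U 0) * neg_powr c w
           + w * cell_integral U (w + 1) c"
proof -
  have "continuous_on {0..1} U"
    using U by (meson DERIV_continuous continuous_on_eq_continuous_within)
  then have "((\<lambda>x. of_real (P x) * neg_powr (x + c) w + of_real (U x) * neg_powr (x + c) (w + 1) * - w)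
      has_integral (cell_integral P w c + cell_integral U (w + 1) c * - w)) {0..1}"
    using assms(1,2) by (intro has_integral_add has_integral_mult_left cell_integral_has_integral)
  moreover have "((\<lambda>x. of_real (U x) * neg_powr (x + c) w) has_vector_derivative
      of_real (P x) * neg_powr (x + c) w + of_real (U x) * neg_powr (x + c) (w + 1) * - w)
      (at x within {0..1})" if "x \<in> {0..1}" for x
  proof -
    have "((\<lambda>x. of_real (U x)) has_vector_derivative of_real (P x)) (at x within {0..1})"
      using U[OF that] by (rule has_vector_derivative_of_real)
    moreover have "((\<lambda>x. neg_powr (x + c) w) has_vector_derivative - w * neg_powr (x + c) (w + 1))
        (at x within {0..1})"
      using that assms(2) by (intro neg_powr_shift_has_vector_derivative) auto
    ultimately show ?thesis
      by (rule has_vector_derivative_mult[THEN has_vector_derivative_eq_rhs]) (simp add: algebra_simps)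
  qed
  ultimately have "cell_integral P w c + cell_integral U (w + 1) c * - w
      = of_real (U 1) * neg_powr (1 + c) w - of_real (U 0) * neg_powr (0 + c) w"
    by (intro has_integral_derivative_eq_diff) auto
  then show ?thesis
    by (simp add: algebra_simps)
qed

lemma cell_integral_minus: "cell_integral (\<lambda>x. - P x) w c = - cell_integral P w c"
  by (simp add: cell_integral_def)

lemma cell_integral_diff_const:
  assumes "continuous_on {0..1} P" "c > 0"
  shows "cell_integral (\<lambda>x. P x - d) w c = cell_integral P w c - of_real d * cell_integral (\<lambda>_. 1) w c"
proof -
  have "((\<lambda>x. of_real (P x) * neg_powr (x + c) w - of_real 1 * neg_powr (x + c) w * of_real d)
      has_integral (cell_integral P w c - cell_integral (\<lambda>_. 1) w c * of_real d)) {0..1}"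
    using assms by (intro has_integral_diff has_integral_mult_left cell_integral_has_integral) auto
  then have "((\<lambda>x. of_real (P x - d) * neg_powr (x + c) w)
      has_integral (cell_integral P w c - of_real d * cell_integral (\<lambda>_. 1) w c)) {0..1}"
    by (simp add: algebra_simps)
  then show ?thesis
    unfolding cell_integral_def[of "\<lambda>x. P x - d"] by (rule integral_unique)
qed

lemma cell_integral_p_step:
  assumes "c > 0" "j \<ge> 1"
  shows "cell_integral (p j) w c
           = of_real (q j 1) * cell_integral (\<lambda>_. 1) w c + w * cell_integral (p (Suc j)) (w + 1) c"
proof -
  have "cell_integral (\<lambda>x. p j x - q j 1) w c = w * cell_integral (p (Suc j)) (w + 1) c"
    using cell_integral_by_parts[of "\<lambda>x. p j x - q j 1" c "p (Suc j)" w] assms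
    by (simp add: p_at_0 p_at_1 continuous_on_p continuous_on_diff p_Suc_has_real_derivative)
  then show ?thesis
    using cell_integral_diff_const[OF continuous_on_p assms(1)] by (simp add: algebra_simps)
qed

lemma cell_integral_one:
  assumes "c > 0"
  shows "(w - 1) * cell_integral (\<lambda>_. 1) w c = neg_powr c (w - 1) - neg_powr (1 + c) (w - 1)"
proof -
  have "((\<lambda>x. of_real 1 * neg_powr (x + c) w * - (w - 1)) has_integral
      cell_integral (\<lambda>_. 1) w c * - (w - 1)) {0..1}"
    using assms by (intro has_integral_mult_left cell_integral_has_integral) auto
  moreover have "((\<lambda>x. neg_powr (x + c) (w - 1)) has_vector_derivative
      of_real 1 * neg_powr (x + c) w * - (w - 1)) (at x within {0..1})" if "x \<in> {0..1}" for x
    using neg_powr_shift_has_vector_derivative[of x c "w - 1"] that assms by (simp add: mult_ac)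
  ultimately have "cell_integral (\<lambda>_. 1) w c * - (w - 1)
      = neg_powr (1 + c) (w - 1) - neg_powr (0 + c) (w - 1)"
    by (intro has_integral_derivative_eq_diff) auto
  then show ?thesis
    by (simp add: algebra_simps)
qed

text \<open>Two integrations by parts, through the antiderivative \<open>x - 1/2\<close> of \<open>1\<close> and then
  \<open>-p\<^sub>1\<close> of \<open>x - 1/2\<close>: the trapezoidal rule with its remainder.\<close>
lemma cell_integral_one_trapezoid:
  assumes "c > 0"
  shows "cell_integral (\<lambda>_. 1) s c
           = (neg_powr c s + neg_powr (1 + c) s) / 2 - s * (s + 1) * cell_integral (p 1) (s + 2) c"
proof -
  have "((\<lambda>x. x - 1/2) has_real_derivative 1) (at x within {0..1})" for x :: real
    by (auto intro!: derivative_eq_intros)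
  then have trapezoid: "cell_integral (\<lambda>_. 1) s c
      = (neg_powr c s + neg_powr (1 + c) s) / 2 + s * cell_integral (\<lambda>x. x - 1/2) (s + 1) c"
    using cell_integral_by_parts[of "\<lambda>_. 1" c "\<lambda>x. x - 1/2" s] assms by (simp add: field_simps)
  have "((\<lambda>x. - p 1 x) has_real_derivative x - 1/2) (at x within {0..1})" for x :: real
    unfolding p_1_eq by (auto intro!: derivative_eq_intros simp: field_simps)
  then have remainder: "cell_integral (\<lambda>x. x - 1/2) (s + 1) c = - ((s + 1) * cell_integral (p 1) (s + 2) c)"
    using cell_integral_by_parts[of "\<lambda>x. x - 1/2" c "\<lambda>x. - p 1 x" "s + 1"] assms
    by (simp add: p_at_0 p_at_1 add.assoc continuous_on_diff cell_integral_minus del: p.simps)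
  show ?thesis
    unfolding trapezoid remainder by (simp add: algebra_simps)
qed

lemma zeta_integral_one:
  assumes "a > 0" "Re w > 1"
  shows "(w - 1) * zeta_integral (\<lambda>_. 1) a w = neg_powr a (w - 1)"
proof -
  define f where "f m = neg_powr (real m + a) (w - 1)" for m
  have "(\<lambda>m. f m - f (Suc m)) sums (f 0 - 0)"
    unfolding f_def using assms by (intro telescope_sums' neg_powr_tendsto_0) auto
  moreover have "f m - f (Suc m) = (w - 1) * cell_integral (\<lambda>_. 1) w (real m + a)" for m
    using cell_integral_one[of "real m + a" w] assms by (simp add: f_def add_ac)
  ultimately have "(\<lambda>m. (w - 1) * cell_integral (\<lambda>_. 1) w (real m + a)) sums neg_powr a (w - 1)"
    by (simp add: f_def)
  moreover have "(\<lambda>m. (w - 1) * cell_integral (\<lambda>_. 1) w (real m + a))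
      sums ((w - 1) * zeta_integral (\<lambda>_. 1) a w)"
    using assms by (intro sums_mult zeta_integral_sums) auto
  ultimately show ?thesis
    by (rule sums_unique2[symmetric])
qed

lemma zeta_integral_p_step:
  assumes "a > 0" "Re w > 1" "j \<ge> 1"
  shows "zeta_integral (p j) a w
           = of_real (q j 1) * zeta_integral (\<lambda>_. 1) a w + w * zeta_integral (p (Suc j)) a (w + 1)"
proof -
  have "(\<lambda>m. of_real (q j 1) * cell_integral (\<lambda>_. 1) w (real m + a)
              + w * cell_integral (p (Suc j)) (w + 1) (real m + a))
        sums (of_real (q j 1) * zeta_integral (\<lambda>_. 1) a w + w * zeta_integral (p (Suc j)) a (w + 1))"
    using assms by (intro sums_add sums_mult zeta_integral_sums continuous_on_p) auto
  moreover have "(\<lambda>m. cell_integral (p j) w (real m + a)) sums zeta_integral (p j) a w"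
    using assms by (intro zeta_integral_sums continuous_on_p)
  moreover have "cell_integral (p j) w (real m + a) = of_real (q j 1) * cell_integral (\<lambda>_. 1) w (real m + a)
              + w * cell_integral (p (Suc j)) (w + 1) (real m + a)" for m
    using assms by (intro cell_integral_p_step) auto
  ultimately show ?thesis
    by (simp add: sums_iff)
qed

lemma zeta_integral_one_trapezoid:
  assumes "a > 0" "Re s > 1"
  shows "zeta_integral (\<lambda>_. 1) a s
           = hz_series s a - neg_powr a s / 2 - s * (s + 1) * zeta_integral (p 1) a (s + 2)"
proof -
  have series: "(\<lambda>m. neg_powr (real m + a) s) sums hz_series s a"
    using assms by (intro hz_series_sums) auto
  then have "(\<lambda>m. neg_powr (real (Suc m) + a) s) sums (hz_series s a - neg_powr (real 0 + a) s)"
    by (subst sums_Suc_iff) simp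
  then have "(\<lambda>m. neg_powr (1 + (real m + a)) s) sums (hz_series s a - neg_powr a s)"
    by (simp add: add_ac)
  then have "(\<lambda>m. (neg_powr (real m + a) s + neg_powr (1 + (real m + a)) s) / 2
                 - s * (s + 1) * cell_integral (p 1) (s + 2) (real m + a))
        sums ((hz_series s a + (hz_series s a - neg_powr a s)) / 2
              - s * (s + 1) * zeta_integral (p 1) a (s + 2))"
    using assms by (intro sums_diff sums_divide sums_add sums_mult series zeta_integral_sums
        continuous_on_p) auto
  moreover have "(\<lambda>m. cell_integral (\<lambda>_. 1) s (real m + a)) sums zeta_integral (\<lambda>_. 1) a s"
    using assms by (intro zeta_integral_sums) auto
  then have "(\<lambda>m. (neg_powr (real m + a) s + neg_powr (1 + (real m + a)) s) / 2
                 - s * (s + 1) * cell_integral (p 1) (s + 2) (real m + a)) sums zeta_integral (\<lambda>_. 1) a s"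
    using assms by (simp add: cell_integral_one_trapezoid)
  ultimately show ?thesis
    by (simp add: sums_iff field_simps)
qed

lemma hz_series_eq:
  assumes "a > 0" "Re s > 1"
  shows "hz_series s a = neg_powr a (s - 1) / (s - 1) + neg_powr a s / 2
           + pochhammer s 2 * zeta_integral (p 1) a (s + 2)"
proof -
  have "s - 1 \<noteq> 0"
    using assms(2) by auto
  then have "zeta_integral (\<lambda>_. 1) a s = neg_powr a (s - 1) / (s - 1)"
    using zeta_integral_one[OF assms] by (simp add: eq_divide_eq mult.commute)
  then show ?thesis
    using zeta_integral_one_trapezoid[OF assms] by (simp add: pochhammer_Suc numeral_2_eq_2 field_simps)
qed

lemma uniform_limit_hz_series_integrand:
  assumes "continuous_on {0..1} P" "a > 0" "Re w > 1"
  shows "uniform_limit {0..1} (\<lambda>n x. \<Sum>m<n. of_real (P x) * neg_powr (x + (real m + a)) w)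
           (\<lambda>x. of_real (P x) * hz_series w (x + a)) sequentially"
proof -
  obtain B where B: "\<And>x. x \<in> {0..1} \<Longrightarrow> \<bar>P x\<bar> \<le> B"
    using continuous_on_compact_bound[OF compact_Icc assms(1)] by auto
  have limit: "uniform_limit {0..1} (\<lambda>n x. \<Sum>m<n. of_real (P x) * neg_powr (x + (real m + a)) w)
      (\<lambda>x. \<Sum>m. of_real (P x) * neg_powr (x + (real m + a)) w) sequentially"
  proof (rule Weierstrass_m_test)
    show "norm (of_real (P x) * neg_powr (x + (real n + a)) w) \<le> B * (real n + a) powr (- Re w)"
      if "x \<in> {0..1}" for n x
    proof -
      have "norm (of_real (P x) * neg_powr (x + (real n + a)) w)
          = \<bar>P x\<bar> * norm (neg_powr (x + (real n + a)) w)"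
        by (simp add: norm_mult)
      also have "\<dots> \<le> B * (real n + a) powr (- Re w)"
        using that assms B[OF that] by (intro mult_mono norm_neg_powr_le) auto
      finally show ?thesis .
    qed
    show "summable (\<lambda>n. B * (real n + a) powr (- Re w))"
      using assms by (intro summable_mult summable_shifted_powr) auto
  qed
  have "(\<Sum>m. of_real (P x) * neg_powr (x + (real m + a)) w) = of_real (P x) * hz_series w (x + a)"
    if "x \<in> {0..1}" for x
  proof -
    have "(\<lambda>m. neg_powr (x + (real m + a)) w) sums hz_series w (x + a)"
      using hz_series_sums[of "x + a" w] that assms by (simp add: add.left_commute)
    then show ?thesis
      by (simp add: sums_iff suminf_mult)
  qed
  then show ?thesis
    using limit
    by (subst (asm) uniform_limit_cong'[where
          g = "\<lambda>n x. \<Sum>m<n. of_real (P x) * neg_powr (x + (real m + a)) w"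
          and i = "\<lambda>x. of_real (P x) * hz_series w (x + a)"]) auto
qed

lemma zeta_integral_has_integral:
  assumes "continuous_on {0..1} P" "a > 0" "Re w > 1"
  shows "((\<lambda>x. of_real (P x) * hz_series w (x + a)) has_integral zeta_integral P a w) {0..1}"
proof -
  define f where "f n x = (\<Sum>m<n. of_real (P x) * neg_powr (x + (real m + a)) w)" for n x
  have "continuous_on {0..1} (f n)" for n
    unfolding f_def using assms by (intro continuous_on_sum continuous_on_cell_integrand) auto
  then obtain I J where I: "\<And>n. (f n has_integral I n) {0..1}"
    and J: "((\<lambda>x. of_real (P x) * hz_series w (x + a)) has_integral J) {0..1}"
    and "I \<longlonglongrightarrow> J"
    using uniform_limit_integral[OF uniform_limit_hz_series_integrand[OF assms, folded f_def] _ sequentially_bot]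
    by blast
  moreover have "(f n has_integral (\<Sum>m<n. cell_integral P w (real m + a))) {0..1}" for n
    unfolding f_def using assms by (intro has_integral_sum cell_integral_has_integral) auto
  then have "I = (\<lambda>n. \<Sum>m<n. cell_integral P w (real m + a))"
    using I has_integral_unique by blast
  ultimately have "J = zeta_integral P a w"
    using zeta_integral_sums[OF assms] LIMSEQ_unique unfolding sums_def by blast
  then show ?thesis
    using J by simp
qed

section \<open>The analytic continuation\<close>

definition remainder_term :: "real \<Rightarrow> nat \<Rightarrow> complex \<Rightarrow> complex" where
  "remainder_term a j s = pochhammer s (Suc j) * zeta_integral (p j) a (s + of_nat j + 1)"

lemma remainder_term_Suc:
  assumes "a > 0" "j \<ge> 1" "Re s > - real j"
  shows "remainder_term a j s
           = pochhammer s j * of_real (q j 1) * neg_powr a (s + of_nat j) + remainder_term a (Suc j) s"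
proof -
  define w where "w = s + of_nat j + 1"
  have w: "Re w > 1"
    using assms by (simp add: w_def)
  have one: "(s + of_nat j) * zeta_integral (\<lambda>_. 1) a w = neg_powr a (s + of_nat j)"
    using zeta_integral_one[OF assms(1) w] by (simp add: w_def)
  have "remainder_term a j s = pochhammer s j * (s + of_nat j)
      * (of_real (q j 1) * zeta_integral (\<lambda>_. 1) a w + w * zeta_integral (p (Suc j)) a (w + 1))"
    unfolding remainder_term_def pochhammer_Suc w_def[symmetric] zeta_integral_p_step[OF assms(1) w assms(2)] ..
  also have "\<dots> = pochhammer s j * of_real (q j 1) * ((s + of_nat j) * zeta_integral (\<lambda>_. 1) a w)
      + pochhammer s j * (s + of_nat j) * w * zeta_integral (p (Suc j)) a (w + 1)"
    by (simp add: algebra_simps)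
  also have "\<dots> = pochhammer s j * of_real (q j 1) * neg_powr a (s + of_nat j) + remainder_term a (Suc j) s"
    unfolding one remainder_term_def pochhammer_Suc by (simp add: w_def algebra_simps)
  finally show ?thesis .
qed

definition hz_expansion :: "real \<Rightarrow> nat \<Rightarrow> complex \<Rightarrow> complex" where
  "hz_expansion a k s = neg_powr a (s - 1) / (s - 1) + neg_powr a s / 2
     + (\<Sum>j=1..k+1. pochhammer s j * of_real (q j 1) * neg_powr a (s + of_nat j))
     + remainder_term a (k + 2) s"

lemma hz_expansion_Suc:
  assumes "a > 0" "Re s > - (real k + 2)"
  shows "hz_expansion a (Suc k) s = hz_expansion a k s"
  using remainder_term_Suc[of a "k + 2" s] assms by (simp add: hz_expansion_def algebra_simps)

lemma hz_expansion_mono_eq: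
  assumes "a > 0" "k \<le> k'" "Re s > - (real k + 2)"
  shows "hz_expansion a k' s = hz_expansion a k s"
  using assms(2)
proof (induction k' rule: dec_induct)
  case (step n)
  then show ?case
    using hz_expansion_Suc[of a n s] assms by simp
qed simp

lemma hz_expansion_eq_hz_series:
  assumes "a > 0" "Re s > 1"
  shows "hz_expansion a k s = hz_series s a"
proof -
  have "remainder_term a 1 s = s * of_real (q 1 1) * neg_powr a (s + 1) + remainder_term a 2 s"
    using assms remainder_term_Suc[of a 1 s] by (simp add: numeral_2_eq_2)
  moreover have "remainder_term a 1 s = pochhammer s 2 * zeta_integral (p 1) a (s + 2)"
    by (simp add: remainder_term_def numeral_2_eq_2 add.assoc)
  ultimately have "hz_expansion a 0 s = hz_series s a"
    unfolding hz_expansion_def hz_series_eq[OF assms] by (simp add: numeral_2_eq_2)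
  then show ?thesis
    using hz_expansion_mono_eq[of a 0 k s] assms by simp
qed

lemma holomorphic_remainder_term:
  assumes "a > 0"
  shows "remainder_term a j holomorphic_on {s. Re s > - real j}"
proof -
  have "(zeta_integral (p j) a \<circ> (\<lambda>s. s + of_nat j + 1)) holomorphic_on {s. Re s > - real j}"
    by (rule holomorphic_on_compose_gen[OF _ holomorphic_zeta_integral[OF continuous_on_p assms]])
       (auto intro!: holomorphic_intros)
  then show ?thesis
    unfolding remainder_term_def by (intro holomorphic_intros) (auto simp: o_def)
qed

lemma holomorphic_hz_expansion:
  assumes "a > 0"
  shows "hz_expansion a k holomorphic_on ({s. Re s > - (real k + 2)} - {1})"
proof -
  have "remainder_term a (k + 2) holomorphic_on ({s. Re s > - (real k + 2)} - {1})"
    by (rule holomorphic_on_subset[OF holomorphic_remainder_term[OF assms]]) auto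
  then show ?thesis
    unfolding hz_expansion_def by (intro holomorphic_intros holomorphic_on_neg_powr) auto
qed

lemma hurwitz_zeta_eqI:
  assumes holo: "f holomorphic_on - {1}"
    and series: "\<And>z. Re z > 1 \<Longrightarrow> f z = (\<Sum>m. 1 / (complex_of_real (real m + a)) powr z)"
    and "s \<noteq> 1"
  shows "hurwitz_zeta s a = f s"
proof -
  define is_hz where "is_hz g \<longleftrightarrow> g holomorphic_on - {1} \<and>
      (\<forall>z. Re z > 1 \<longrightarrow> g z = (\<Sum>m. 1 / (complex_of_real (real m + a)) powr z))" for g
  have "is_hz f"
    unfolding is_hz_def using holo series by blast
  then have hz: "is_hz (SOME g. is_hz g)"
    by (rule someI[of is_hz])
  define g where "g = (SOME g. is_hz g)"
  have "g holomorphic_on - {1}" "\<And>z. z \<in> {z. Re z > 1} \<Longrightarrow> g z = f z"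
    using hz series unfolding g_def is_hz_def by auto
  moreover have "{z. Re z > 1} \<noteq> {}"
    by (auto intro!: exI[of _ 2])
  ultimately have "g s = f s"
    using holo assms(3)
    by (intro analytic_continuation_open[of "{z. Re z > 1}" "- {1}" g f s])
       (auto simp: open_halfspace_Re_gt connected_punctured_universe)
  then show ?thesis
    unfolding hurwitz_zeta_def g_def is_hz_def .
qed

text \<open>Every expansion of order at least \<open>\<lceil>-Re s\<rceil>\<close> is valid at \<open>s\<close>, and they all agree.\<close>
definition hz_continuation :: "real \<Rightarrow> complex \<Rightarrow> complex" where
  "hz_continuation a s = hz_expansion a (nat \<lceil>- Re s\<rceil>) s"

lemma hz_continuation_eq_expansion:
  assumes "a > 0" "Re s > - (real k + 2)"
  shows "hz_continuation a s = hz_expansion a k s"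
proof -
  define k0 where "k0 = nat \<lceil>- Re s\<rceil>"
  have "Re s > - (real k0 + 2)"
    unfolding k0_def by linarith
  then have "hz_expansion a (max k k0) s = hz_expansion a k0 s"
    using assms by (intro hz_expansion_mono_eq) auto
  moreover have "hz_expansion a (max k k0) s = hz_expansion a k s"
    using assms by (intro hz_expansion_mono_eq) auto
  ultimately show ?thesis
    unfolding hz_continuation_def k0_def[symmetric] by simp
qed

lemma holomorphic_hz_continuation:
  assumes "a > 0"
  shows "hz_continuation a holomorphic_on - {1}"
proof -
  have "\<exists>f'. (hz_continuation a has_field_derivative f') (at s0)" if "s0 \<noteq> 1" for s0
  proof -
    define k where "k = nat \<lceil>- Re s0\<rceil>"
    define U where "U = {s. Re s > - (real k + 2)} - {1}"
    have U: "open U" "s0 \<in> U"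
      using that unfolding U_def k_def by (auto intro!: open_Diff open_halfspace_Re_gt) linarith
    obtain f' where "(hz_expansion a k has_field_derivative f') (at s0)"
      using holomorphic_hz_expansion[OF assms, of k] U holomorphic_on_open unfolding U_def by blast
    then have "(hz_continuation a has_field_derivative f') (at s0)"
      by (rule has_field_derivative_transform_within_open[OF _ U])
         (use hz_continuation_eq_expansion[OF assms] in \<open>auto simp: U_def\<close>)
    then show ?thesis ..
  qed
  then show ?thesis
    by (simp add: holomorphic_on_open open_Compl)
qed

lemma hurwitz_zeta_eq_expansion:
  assumes "a > 0" "s \<noteq> 1" "Re s > - (real k + 2)"
  shows "hurwitz_zeta s a = hz_expansion a k s"
proof -
  have "hurwitz_zeta s a = hz_continuation a s"
  proof (rule hurwitz_zeta_eqI[OF holomorphic_hz_continuation[OF assms(1)] _ assms(2)])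
    fix z :: complex assume "Re z > 1"
    then show "hz_continuation a z = (\<Sum>m. 1 / (complex_of_real (real m + a)) powr z)"
      using assms(1) hz_continuation_eq_expansion[where k = 0] hz_expansion_eq_hz_series[where k = 0]
      by (simp add: hz_series_def neg_powr_eq_inverse_powr add_nonneg_pos)
  qed
  then show ?thesis
    using hz_continuation_eq_expansion[OF assms(1,3)] by simp
qed

lemma hurwitz_zeta_eq_hz_series:
  assumes "a > 0" "Re w > 1"
  shows "hurwitz_zeta w a = hz_series w a"
proof -
  have "w \<noteq> 1"
    using assms(2) by auto
  then show ?thesis
    using hurwitz_zeta_eq_expansion[where k = 0] hz_expansion_eq_hz_series[OF assms] assms by simp
qed

lemma integral_p_hurwitz_zeta:
  assumes "a > 0" "Re w > 1"
  shows "integral {0..1} (\<lambda>x. of_real (p j x) * hurwitz_zeta w (x + a)) = zeta_integral (p j) a w"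
proof -
  have "integral {0..1} (\<lambda>x. of_real (p j x) * hurwitz_zeta w (x + a))
      = integral {0..1} (\<lambda>x. of_real (p j x) * hz_series w (x + a))"
    using assms by (intro integral_cong) (simp add: hurwitz_zeta_eq_hz_series)
  also have "\<dots> = zeta_integral (p j) a w"
    using zeta_integral_has_integral[OF continuous_on_p assms] by (rule integral_unique)
  finally show ?thesis .
qed

lemma hurwitz_zeta_expansion:
  assumes "a > 0" "s \<noteq> 1" "Re s > - (real k + 2)"
  shows "hurwitz_zeta s a = neg_powr a (s - 1) / (s - 1) + neg_powr a s / 2
     + (\<Sum>j=1..k+1. pochhammer s j * of_real (q j 1) * neg_powr a (s + of_nat j))
     + pochhammer s (k + 3) *
         integral {0..1} (\<lambda>x. of_real (p (k + 2) x) * hurwitz_zeta (s + of_nat k + 3) (x + a))"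
proof -
  have "integral {0..1} (\<lambda>x. of_real (p (k + 2) x) * hurwitz_zeta (s + of_nat k + 3) (x + a))
      = zeta_integral (p (k + 2)) a (s + of_nat k + 3)"
    using assms by (intro integral_p_hurwitz_zeta) auto
  then show ?thesis
    using hurwitz_zeta_eq_expansion[OF assms]
    by (simp add: hz_expansion_def remainder_term_def add_ac numeral_3_eq_3)
qed

section \<open>Pochhammer symbols at non-positive integers\<close>

lemma pochhammer_minus_of_nat:
  assumes "j \<le> k"
  shows "pochhammer (- of_nat k :: 'a :: field_char_0) j = (-1) ^ j * fact k / fact (k - j)"
proof -
  have "- of_nat k + of_nat j = - (of_nat (k - j) :: 'a)"
    using assms by (simp add: of_nat_diff)
  then have "(-1) ^ k * fact k = pochhammer (- of_nat k :: 'a) j * ((-1) ^ (k - j) * fact (k - j))"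
    using pochhammer_product[OF assms, of "- of_nat k :: 'a"] by (simp add: pochhammer_same)
  moreover have "(-1) ^ k = (-1) ^ j * ((-1) ^ (k - j) :: 'a)"
    using assms by (simp flip: power_add)
  ultimately show ?thesis
    by (simp add: field_simps)
qed

fun pochhammer_deriv :: "nat \<Rightarrow> 'a :: comm_ring_1 \<Rightarrow> 'a" where
  "pochhammer_deriv 0 s = 0"
| "pochhammer_deriv (Suc n) s = pochhammer_deriv n s * (s + of_nat n) + pochhammer s n"

lemma pochhammer_has_field_derivative:
  "((\<lambda>s. pochhammer s n) has_field_derivative pochhammer_deriv n s) (at s within S)"
  for s :: "'a :: real_normed_field"
proof (induction n)
  case (Suc n)
  have "((\<lambda>s. pochhammer s n * (s + of_nat n)) has_field_derivative
          pochhammer s n * 1 + pochhammer_deriv n s * (s + of_nat n)) (at s within S)"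
    by (rule DERIV_mult'[OF Suc.IH]) (auto intro!: derivative_eq_intros)
  then show ?case
    by (simp add: pochhammer_Suc add.commute)
qed simp

lemma pochhammer_deriv_minus_of_nat:
  assumes "j \<le> k"
  shows "pochhammer_deriv j (- of_nat k :: 'a :: {real_normed_field, field_char_0})
           = (-1) ^ (j + 1) * fact k / fact (k - j) * (harm k - harm (k - j))"
  using assms
proof (induction j)
  case (Suc j)
  define m where "m = k - Suc j"
  have km: "k - j = Suc m"
    using Suc.prems unfolding m_def by simp
  have "- of_nat k + of_nat j = - (of_nat m + 1 :: 'a)"
    using Suc.prems unfolding m_def by (simp add: of_nat_diff)
  then have "pochhammer_deriv (Suc j) (- of_nat k :: 'a)
      = (-1) ^ (j + 1) * fact k / fact (Suc m) * (harm k - harm (Suc m)) * - (of_nat m + 1)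
        + (-1) ^ j * fact k / fact (Suc m)"
    using Suc pochhammer_minus_of_nat[of j k] by (simp add: km)
  also have "\<dots> = (-1) ^ (Suc j + 1) * fact k / fact m * (harm k - harm m)"
  proof -
    have identity: "(-1) ^ (j + 1) * K / (c * F) * (h - (h' + inverse c)) * - c + (-1) ^ j * K / (c * F)
        = (-1) ^ (Suc j + 1) * K / F * (h - h')" if "c \<noteq> 0" "F \<noteq> 0" for K F c h h' :: 'a
      using that by (simp add: field_simps)
    have fact: "fact (Suc m) = (of_nat m + 1) * (fact m :: 'a)"
      and harm: "harm (Suc m) = harm m + inverse (of_nat m + 1 :: 'a)"
      by (simp_all add: harm_Suc add.commute)
    have "(of_nat m + 1 :: 'a) \<noteq> 0"
      by (metis of_nat_Suc of_nat_eq_0_iff add.commute nat.distinct(1))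
    then show ?thesis
      unfolding fact harm by (rule identity) simp
  qed
  finally show ?case
    by (simp add: m_def)
qed simp

lemma pochhammer_deriv_Suc_self:
  "pochhammer_deriv (Suc k) (- of_nat k :: 'a :: {idom, semiring_char_0})
     = (-1) ^ k * fact k"
  by (simp add: pochhammer_same)

lemma pochhammer_deriv_add3_self:
  "pochhammer_deriv (k + 3) (- of_nat k :: 'a :: {idom, semiring_char_0})
     = 2 * (-1) ^ k * fact k"
proof -
  have "pochhammer (- of_nat k :: 'a) (Suc k) = 0" "pochhammer (- of_nat k :: 'a) (Suc (Suc k)) = 0"
    by (simp_all add: pochhammer_of_nat_eq_0_lemma del: of_nat_Suc)
  then show ?thesis
    using pochhammer_deriv_Suc_self[of k, where 'a = 'a] by (simp add: numeral_3_eq_3 algebra_simps)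
qed

section \<open>Values and derivatives at non-positive integers\<close>

lemma riemann_zeta_eq_expansion:
  assumes "s \<noteq> 1" "Re s > - (real k + 2)"
  shows "riemann_zeta s = 1 / (s - 1) + 1/2 + (\<Sum>j=1..k+1. pochhammer s j * of_real (q j 1))
           + pochhammer s (k + 3) * zeta_integral (p (k + 2)) 1 (s + of_nat k + 3)"
  using hurwitz_zeta_eq_expansion[OF zero_less_one assms]
  by (simp add: riemann_zeta_def hz_expansion_def remainder_term_def add_ac numeral_3_eq_3)

lemma deriv_riemann_zeta:
  assumes "s \<noteq> 1" "Re s > - (real k + 2)"
  defines "R \<equiv> zeta_integral (p (k + 2)) 1"
  shows "deriv riemann_zeta s = - 1 / (s - 1)^2 + (\<Sum>j=1..k+1. pochhammer_deriv j s * of_real (q j 1))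
           + pochhammer_deriv (k + 3) s * R (s + of_nat k + 3)
           + pochhammer s (k + 3) * deriv R (s + of_nat k + 3)"
proof -
  define U where "U = {z. Re z > - (real k + 2)} - {1}"
  have U: "open U" "s \<in> U"
    using assms unfolding U_def by (auto intro!: open_Diff open_halfspace_Re_gt)
  have "(R has_field_derivative deriv R (s + of_nat k + 3)) (at (s + of_nat k + 3))"
    unfolding R_def using assms(2)
    by (intro holomorphic_derivI[OF holomorphic_zeta_integral[OF continuous_on_p zero_less_one]])
       (auto simp: open_halfspace_Re_gt)
  then have "((\<lambda>z. 1 / (z - 1) + 1/2 + (\<Sum>j=1..k+1. pochhammer z j * of_real (q j 1))
        + pochhammer z (k + 3) * R (z + of_nat k + 3)) has_field_derivative
      - 1 / (s - 1)^2 + (\<Sum>j=1..k+1. pochhammer_deriv j s * of_real (q j 1))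
        + pochhammer_deriv (k + 3) s * R (s + of_nat k + 3)
        + pochhammer s (k + 3) * deriv R (s + of_nat k + 3)) (at s)"
    using assms(1)
    by (auto intro!: derivative_eq_intros pochhammer_has_field_derivative DERIV_chain2[of R]
             simp: power2_eq_square field_simps)
  then have "(riemann_zeta has_field_derivative
      - 1 / (s - 1)^2 + (\<Sum>j=1..k+1. pochhammer_deriv j s * of_real (q j 1))
        + pochhammer_deriv (k + 3) s * R (s + of_nat k + 3)
        + pochhammer s (k + 3) * deriv R (s + of_nat k + 3)) (at s)"
    by (rule has_field_derivative_transform_within_open[OF _ U])
       (auto simp: U_def R_def riemann_zeta_eq_expansion)
  then show ?thesis
    by (rule DERIV_imp_deriv)
qed

lemma hurwitz_zeta_powr_expansion:
  assumes "a > 0" "s \<noteq> 1" "Re s > - (real k + 2)"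
  shows "hurwitz_zeta s a =
           (complex_of_real a) powr (1 - s) / (s - 1)
           + 1/2 * (complex_of_real a) powr (- s)
           + (\<Sum>j=1..k+1. pochhammer s j * complex_of_real (q j 1)
                 * (complex_of_real a) powr (- s - of_nat j))
           + pochhammer s (k+3) *
               integral {0..1} (\<lambda>x. complex_of_real (p (k+2) x)
                  * hurwitz_zeta (s + of_nat k + 3) (x + a))"
proof -
  have "of_real a powr w = neg_powr a (- w)" for w
    using assms(1) by (simp add: neg_powr_eq_powr)
  then show ?thesis
    using hurwitz_zeta_expansion[OF assms] by (simp add: add_ac)
qed

lemma hurwitz_zeta_0:
  assumes "a > 0"
  shows "hurwitz_zeta 0 a = 1/2 - complex_of_real a"
  using hurwitz_zeta_expansion[OF assms, of 0 0] neg_powr_minus_of_nat[OF assms, of 1]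
  by (simp add: pochhammer_0_left)

lemma hurwitz_zeta_minus_1:
  assumes "a > 0"
  shows "hurwitz_zeta (-1) a = complex_of_real ((a - a^2) / 2 - 1/12)"
proof -
  have "pochhammer (-1 :: complex) 3 = 0"
    using pochhammer_of_nat_eq_0_lemma[of 1 3] by simp
  then show ?thesis
    using hurwitz_zeta_expansion[OF assms, of "-1" 0] q_1_at_1[unfolded One_nat_def]
      neg_powr_minus_of_nat[OF assms, of 1] neg_powr_minus_of_nat[OF assms, of 2]
    by (simp add: field_simps)
qed

lemma hurwitz_zeta_minus_of_nat:
  assumes "a > 0" "k \<ge> 2"
  shows "hurwitz_zeta (- of_nat k) a = complex_of_real
           (- (a ^ (k+1)) / (k+1) + 1/2 * a ^ k
            + (\<Sum>j=1..k. (-1)^j * q j 1 * (fact k / fact (k - j)) * a ^ (k - j)))"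
proof -
  define s :: complex where "s = - of_nat k"
  have "s \<noteq> 1" "Re s > - (real (k - 1) + 2)"
    using assms(2) by (auto simp: s_def complex_eq_iff)
  moreover have "k - 1 + 1 = k" "k - 1 + 3 = Suc k + 1"
    using assms(2) by auto
  moreover have "pochhammer s (Suc k + 1) = 0"
    unfolding s_def by (intro pochhammer_of_nat_eq_0_lemma) simp
  ultimately have "hurwitz_zeta s a = neg_powr a (s - 1) / (s - 1) + neg_powr a s / 2
      + (\<Sum>j=1..k. pochhammer s j * of_real (q j 1) * neg_powr a (s + of_nat j))"
    using hurwitz_zeta_expansion[OF assms(1), of s "k - 1"] by simp
  also have "(\<Sum>j=1..k. pochhammer s j * of_real (q j 1) * neg_powr a (s + of_nat j))
      = of_real (\<Sum>j=1..k. (-1)^j * q j 1 * (fact k / fact (k - j)) * a ^ (k - j))"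
    unfolding of_real_sum
  proof (rule sum.cong)
    fix j assume j: "j \<in> {1..k}"
    then have "neg_powr a (s + of_nat j) = of_real (a ^ (k - j))"
      using neg_powr_minus_of_nat[OF assms(1), of "k - j"] by (simp add: s_def of_nat_diff)
    moreover have "pochhammer s j = (-1) ^ j * fact k / fact (k - j)"
      unfolding s_def using j by (intro pochhammer_minus_of_nat) simp
    ultimately show "pochhammer s j * of_real (q j 1) * neg_powr a (s + of_nat j)
        = of_real ((-1)^j * q j 1 * (fact k / fact (k - j)) * a ^ (k - j))"
      by simp
  qed simp
  also have "neg_powr a (s - 1) / (s - 1) = - of_real (a ^ (k + 1) / (k + 1))"
  proof -
    have "s - 1 = - of_nat (k + 1)"
      by (simp add: s_def)
    show ?thesis
      unfolding \<open>s - 1 = - of_nat (k + 1)\<close> neg_powr_minus_of_nat[OF assms(1)] divide_minus_right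
      by simp
  qed
  also have "neg_powr a s = of_real (a ^ k)"
    unfolding s_def by (rule neg_powr_minus_of_nat[OF assms(1)])
  finally show ?thesis
    by (simp add: s_def)
qed

lemma riemann_zeta_expansion:
  assumes "s \<noteq> 1" "Re s > - (real k + 2)"
  shows "riemann_zeta s =
           1 / (s - 1) + 1/2
           + (\<Sum>j=1..k+1. pochhammer s j * complex_of_real (q j 1))
           + pochhammer s (k+3) *
               integral {0..1} (\<lambda>x. complex_of_real (p (k+2) x)
                  * hurwitz_zeta (s + of_nat k + 3) (x + 1))"
  using hurwitz_zeta_expansion[OF zero_less_one assms] by (simp add: riemann_zeta_def)

lemma deriv_riemann_zeta_minus_of_nat:
  "deriv riemann_zeta (- of_nat k) =
     - 1 / (of_nat k + 1)^2
     + complex_of_real (\<Sum>j=1..k. (-1)^(j+1) * (fact k / fact (k - j)) * q j 1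
            * (harm k - harm (k - j)))
     + (-1)^k * fact k *
         integral {0..1} (\<lambda>x. complex_of_real (p (k+1) x) * hurwitz_zeta 2 (x + 1))"
proof -
  define s :: complex where "s = - of_nat k"
  define R where "R = zeta_integral (p (k + 2)) 1"
  have "s \<noteq> 1"
    by (simp add: s_def complex_eq_iff)
  moreover have "pochhammer s (k + 3) = 0"
    unfolding s_def by (intro pochhammer_of_nat_eq_0_lemma) simp
  ultimately have "deriv riemann_zeta s = - 1 / (s - 1)^2
      + (\<Sum>j=1..k+1. pochhammer_deriv j s * of_real (q j 1)) + pochhammer_deriv (k + 3) s * R 3"
    using deriv_riemann_zeta[of s k] by (simp add: s_def R_def)
  also have "(\<Sum>j=1..k+1. pochhammer_deriv j s * of_real (q j 1))
      = of_real (\<Sum>j=1..k. (-1)^(j+1) * (fact k / fact (k - j)) * q j 1 * (harm k - harm (k - j)))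
        + (-1)^k * fact k * of_real (q (k + 1) 1)"
    by (simp add: s_def pochhammer_deriv_minus_of_nat pochhammer_same of_real_harm mult_ac)
  also have "pochhammer_deriv (k + 3) s * R 3
      = (-1)^k * fact k * (zeta_integral (p (k + 1)) 1 2 - of_real (q (k + 1) 1))"
  proof -
    have "zeta_integral (\<lambda>_. 1) 1 2 = 1"
      using zeta_integral_one[of 1 2] by simp
    then have "zeta_integral (p (k + 1)) 1 2 = of_real (q (k + 1) 1) + 2 * R 3"
      using zeta_integral_p_step[of 1 2 "k + 1"] by (simp add: R_def numeral_3_eq_3)
    then show ?thesis
      by (simp add: s_def pochhammer_deriv_add3_self)
  qed
  also have "zeta_integral (p (k + 1)) 1 2
      = integral {0..1} (\<lambda>x. of_real (p (k + 1) x) * hurwitz_zeta 2 (x + 1))"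
    by (simp add: integral_p_hurwitz_zeta)
  also have "(s - 1)^2 = (of_nat k + 1)^2"
    by (simp add: s_def power2_eq_square algebra_simps)
  finally show ?thesis
    by (simp add: s_def algebra_simps)
qed

theorem lemma8:
  fixes a :: real
  assumes "a > 0"
  shows "(hurwitz_zeta 0 a = 1/2 - complex_of_real a) \<and>
    (hurwitz_zeta (-1) a = complex_of_real ((a - a^2) / 2 - 1/12)) \<and>
    (\<forall>(k::nat) (s::complex). s \<noteq> 1 \<longrightarrow> Re s > - (real k + 2) \<longrightarrow>
           hurwitz_zeta s a =
             (complex_of_real a) powr (1 - s) / (s - 1)
             + 1/2 * (complex_of_real a) powr (- s)
             + (\<Sum>j=1..k+1. pochhammer s j * complex_of_real (q j 1)
                   * (complex_of_real a) powr (- s - of_nat j))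
             + pochhammer s (k+3) *
                 integral {0..1} (\<lambda>x. complex_of_real (p (k+2) x)
                    * hurwitz_zeta (s + of_nat k + 3) (x + a))) \<and>
    (\<forall>(k::nat). k \<ge> 2 \<longrightarrow>
           hurwitz_zeta (- of_nat k) a = complex_of_real
             (- (a ^ (k+1)) / (k+1) + 1/2 * a ^ k
              + (\<Sum>j=1..k. (-1)^j * q j 1 * (fact k / fact (k - j)) * a ^ (k - j)))) \<and>
    (\<forall>(k::nat) (s::complex). s \<noteq> 1 \<longrightarrow> Re s > - (real k + 2) \<longrightarrow>
           riemann_zeta s =
             1 / (s - 1) + 1/2
             + (\<Sum>j=1..k+1. pochhammer s j * complex_of_real (q j 1))
             + pochhammer s (k+3) *
                 integral {0..1} (\<lambda>x. complex_of_real (p (k+2) x)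
                    * hurwitz_zeta (s + of_nat k + 3) (x + 1))) \<and>
    (\<forall>(k::nat).
           deriv riemann_zeta (- of_nat k) =
             - 1 / (of_nat k + 1)^2
             + complex_of_real (\<Sum>j=1..k. (-1)^(j+1) * (fact k / fact (k - j)) * q j 1
                    * (harm k - harm (k - j)))
             + (-1)^k * fact k *
                 integral {0..1} (\<lambda>x. complex_of_real (p (k+1) x)
                    * hurwitz_zeta 2 (x + 1))) \<and>
    (deriv riemann_zeta 0 =
           -1 + integral {0..1} (\<lambda>x. complex_of_real (p 1 x) * hurwitz_zeta 2 (x + 1)))"
proof -
  have "deriv riemann_zeta 0
      = -1 + integral {0..1} (\<lambda>x. complex_of_real (p 1 x) * hurwitz_zeta 2 (x + 1))"
    using deriv_riemann_zeta_minus_of_nat[of 0] by simp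
  then show ?thesis
    using hurwitz_zeta_0[OF assms] hurwitz_zeta_minus_1[OF assms] hurwitz_zeta_powr_expansion[OF assms]
      hurwitz_zeta_minus_of_nat[OF assms] riemann_zeta_expansion deriv_riemann_zeta_minus_of_nat
    by blast
qed

end
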